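(* Let $\Omega$ be a completely regular Hausdorff space with Stone–Čech compactification $\beta\Omega$. Let $A \subset C(\Omega, [0, 1])$, or let $A$ be a self-adjoint subalgebra of $C_{b}(\Omega, \mathbb{C})$. If $A$ separates disjoint zero-sets of $\Omega$, then for any $A$-antisymmetric $z$-filter $\mathcal{F}$ on $\Omega$, the set $\bigcap_{F \in \mathcal{F}}\mathrm{cl}_{\beta}F$ consists of exactly one point of $\beta \Omega$.
   Context: $\mathrm{cl}_\beta$ denotes closure in $\beta\Omega$; $C_b$ denotes bounded continuous functions. A zero-set is $h^{-1}(0)$ for some $h\in C(\Omega,\mathbb{R})$. $A$ separates disjoint zero-sets of $\Omega$ if for disjoint zero-sets $Z_1,Z_2$ there is $\varphi\in A$ with $\overline{\varphi(Z_1)}\cap\overline{\varphi(Z_2)}=\emptyset$. A $z$-filter is a nonempty family $\mathcal{F}$ of zero-sets with $\emptyset\notin\mathcal{F}$, closed under finite intersections and under passing to larger zero-sets. $\mathcal{F}$ is $A$-antisymmetric if for each $\phi\in A$ with $\bigcap_{F\in\mathcal{F}}\overline{\phi(F)}\subset[0,1]$ (closures in $\mathbb{C}\cup\{\infty\}$), this intersection is a single point. *)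

theory Defs
  imports "HOL-Analysis.Analysis"
begin

definition zero_set :: "'a topology \<Rightarrow> 'a set \<Rightarrow> bool" where
  "zero_set X Z \<longleftrightarrow>
     (\<exists>h::'a \<Rightarrow> real. continuous_map X euclideanreal h \<and> Z = {x \<in> topspace X. h x = 0})"

definition z_filter :: "'a topology \<Rightarrow> 'a set set \<Rightarrow> bool" where
  "z_filter X \<F> \<longleftrightarrow>
     \<F> \<noteq> {} \<and> (\<forall>F\<in>\<F>. zero_set X F) \<and> {} \<notin> \<F> \<and>
     (\<forall>F\<in>\<F>. \<forall>G\<in>\<F>. F \<inter> G \<in> \<F>) \<and>
     (\<forall>F\<in>\<F>. \<forall>Z. zero_set X Z \<and> F \<subseteq> Z \<longrightarrow> Z \<in> \<F>)"

text \<open>A separates disjoint zero-sets of X (closures of images taken in the complex plane;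
  all functions in question are bounded, so this agrees with closure in the Riemann sphere).\<close>
definition separates_zero_sets :: "'a topology \<Rightarrow> ('a \<Rightarrow> complex) set \<Rightarrow> bool" where
  "separates_zero_sets X A \<longleftrightarrow>
     (\<forall>Z1 Z2. zero_set X Z1 \<and> zero_set X Z2 \<and> Z1 \<inter> Z2 = {} \<longrightarrow>
        (\<exists>\<phi>\<in>A. closure (\<phi> ` Z1) \<inter> closure (\<phi> ` Z2) = {}))"

definition antisymmetric_filter :: "('a \<Rightarrow> complex) set \<Rightarrow> 'a set set \<Rightarrow> bool" where
  "antisymmetric_filter A \<F> \<longleftrightarrow>
     (\<forall>\<phi>\<in>A. (\<Inter>F\<in>\<F>. closure (\<phi> ` F)) \<subseteq> complex_of_real ` {0..1} \<longrightarrow>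
        (\<exists>c. (\<Inter>F\<in>\<F>. closure (\<phi> ` F)) = {c}))"

definition Cb :: "'a topology \<Rightarrow> ('a \<Rightarrow> complex) set" where
  "Cb X = {f. continuous_map X euclidean f \<and> bounded (f ` topspace X)}"

definition C01 :: "'a topology \<Rightarrow> ('a \<Rightarrow> complex) set" where
  "C01 X = {f. continuous_map X euclidean f \<and> f ` topspace X \<subseteq> complex_of_real ` {0..1}}"

definition self_adjoint_subalgebra :: "'a topology \<Rightarrow> ('a \<Rightarrow> complex) set \<Rightarrow> bool" where
  "self_adjoint_subalgebra X A \<longleftrightarrow>
     A \<subseteq> Cb X \<and> (\<lambda>x. 0) \<in> A \<and>
     (\<forall>f\<in>A. \<forall>g\<in>A. (\<lambda>x. f x + g x) \<in> A) \<and>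
     (\<forall>f\<in>A. \<forall>g\<in>A. (\<lambda>x. f x * g x) \<in> A) \<and>
     (\<forall>f\<in>A. \<forall>c::complex. (\<lambda>x. c * f x) \<in> A) \<and>
     (\<forall>f\<in>A. (\<lambda>x. cnj (f x)) \<in> A)"

text \<open>This characterizes beta X up to homeomorphism over X.\<close>
definition stone_cech :: "'a topology \<Rightarrow> 'b topology \<Rightarrow> ('a \<Rightarrow> 'b) \<Rightarrow> bool" where
  "stone_cech X K e \<longleftrightarrow>
     compact_space K \<and> Hausdorff_space K \<and> embedding_map X K e \<and>
     K closure_of (e ` topspace X) = topspace K \<and>
     (\<forall>f::'a \<Rightarrow> real. continuous_map X euclideanreal f \<and> bounded (f ` topspace X) \<longrightarrow>
        (\<exists>g. continuous_map K euclideanreal g \<and> (\<forall>x\<in>topspace X. g (e x) = f x)))"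

end

theory Submission
  imports Defs
begin

text \<open>Existence is compactness of \<open>K\<close> together with the finite intersection property of
  a \<open>z\<close>-filter. For uniqueness, two distinct points of the cluster set are separated by an
  Urysohn function on \<open>K\<close>, whose sub- and superlevel sets pull back to disjoint zero-sets
  \<open>Z\<^sub>1, Z\<^sub>2\<close> of \<open>X\<close> whose closures in \<open>K\<close> contain the two points. A function \<open>\<phi> \<in> A\<close>
  separating \<open>Z\<^sub>1\<close> from \<open>Z\<^sub>2\<close> has a continuous extension to \<open>K\<close> taking different values at
  the two points.\<close>

abbreviation cluster_set :: "'b topology \<Rightarrow> ('a \<Rightarrow> 'b) \<Rightarrow> 'a set set \<Rightarrow> 'b set" where
  "cluster_set K e \<F> \<equiv> \<Inter>F\<in>\<F>. K closure_of (e ` F)"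

lemma zero_set_subset_topspace: "zero_set X Z \<Longrightarrow> Z \<subseteq> topspace X"
  unfolding zero_set_def by blast

lemma zero_set_sublevel:
  assumes "continuous_map X euclideanreal f"
  shows "zero_set X {x \<in> topspace X. f x \<le> c}"
  unfolding zero_set_def
proof (intro exI conjI)
  show "continuous_map X euclideanreal (\<lambda>x. max (f x - c) 0)"
    by (intro continuous_map_real_max continuous_map_diff assms) auto
qed (auto simp: max_def)

lemma zero_set_superlevel:
  assumes "continuous_map X euclideanreal f"
  shows "zero_set X {x \<in> topspace X. c \<le> f x}"
  using zero_set_sublevel[of X "\<lambda>x. - f x" "- c"] assms by simp

lemma z_filter_subset_topspace: "z_filter X \<F> \<Longrightarrow> F \<in> \<F> \<Longrightarrow> F \<subseteq> topspace X"
  unfolding z_filter_def using zero_set_subset_topspace by blast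

lemma z_filter_finite_intersection:
  assumes "z_filter X \<F>" "finite \<G>" "\<G> \<subseteq> \<F>"
  shows "\<Inter>\<G> \<noteq> {}"
proof (cases "\<G> = {}")
  case False
  have Int_mem: "F \<inter> G \<in> \<F>" if "F \<in> \<F>" "G \<in> \<F>" for F G
    using assms(1) that unfolding z_filter_def by blast
  have "\<Inter>\<G> \<in> \<F>"
    using \<open>finite \<G>\<close> False \<open>\<G> \<subseteq> \<F>\<close>
    by (induction \<G> rule: finite_ne_induct) (simp_all add: Int_mem)
  moreover have "{} \<notin> \<F>"
    using assms(1) unfolding z_filter_def by blast
  ultimately show ?thesis
    by force
qed simp

lemma cluster_set_nonempty:
  assumes "compact_space K" "continuous_map X K e"
    and "\<And>F. F \<in> \<F> \<Longrightarrow> F \<subseteq> topspace X"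
    and fip: "\<And>\<G>. finite \<G> \<Longrightarrow> \<G> \<subseteq> \<F> \<Longrightarrow> \<Inter>\<G> \<noteq> {}"
  shows "cluster_set K e \<F> \<noteq> {}"
proof -
  let ?cl = "\<lambda>F. K closure_of (e ` F)"
  have "\<Inter>\<C> \<noteq> {}" if \<C>: "finite \<C>" "\<C> \<subseteq> ?cl ` \<F>" for \<C>
  proof -
    obtain \<G> where \<G>: "\<G> \<subseteq> \<F>" "finite \<G>" "\<C> = ?cl ` \<G>"
      using finite_subset_image[OF \<C>] by blast
    obtain x where x: "x \<in> \<Inter>\<G>"
      using fip[OF \<G>(2,1)] by blast
    have "e x \<in> ?cl F" if "F \<in> \<G>" for F
    proof (rule closure_of_subset[THEN subsetD])
      show "e ` F \<subseteq> topspace K"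
        using assms(3) \<G>(1) that continuous_map_image_subset_topspace[OF assms(2)] by blast
      show "e x \<in> e ` F"
        using x that by blast
    qed
    then show ?thesis
      using \<G>(3) by blast
  qed
  then have "\<Inter>(?cl ` \<F>) \<noteq> {}"
    using assms(1) unfolding compact_space_fip by (simp add: closedin_closure_of)
  then show ?thesis
    by simp
qed

lemma extension_in_closure_image:
  assumes "continuous_map K euclidean g" "r \<in> K closure_of (e ` F)"
    and "\<And>x. x \<in> F \<Longrightarrow> g (e x) = f x"
  shows "g r \<in> closure (f ` F)"
proof -
  have "g r \<in> euclidean closure_of (g ` e ` F)"
    using continuous_map_image_closure_subset[OF assms(1)] assms(2) by blast
  moreover have "g ` e ` F = f ` F"
    using assms(3) by force
  ultimately show ?thesis
    by simp
qed

lemma dense_image_closure_of_preimage: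
  assumes "continuous_map X K e" "K closure_of (e ` topspace X) = topspace K"
    and "openin K V" "p \<in> V"
  shows "p \<in> K closure_of (e ` {x \<in> topspace X. e x \<in> V})"
proof -
  have "p \<in> V \<inter> K closure_of (e ` topspace X)"
    using assms(2-4) openin_subset by fastforce
  also have "\<dots> \<subseteq> K closure_of (V \<inter> e ` topspace X)"
    using assms(3) by (rule openin_Int_closure_of_subset)
  also have "V \<inter> e ` topspace X = e ` {x \<in> topspace X. e x \<in> V}"
    by blast
  finally show ?thesis .
qed

lemma stone_cech_continuous_map:
  assumes "stone_cech X K e"
  shows "continuous_map X K e"
proof -
  have "embedding_map X K e"
    using assms by (simp add: stone_cech_def)
  then show ?thesis
    unfolding embedding_map_def by (metis continuous_map_in_subtopology homeomorphic_imp_continuous_map)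
qed

lemma stone_cech_extend_real:
  assumes "stone_cech X K e" "continuous_map X euclideanreal f" "bounded (f ` topspace X)"
  obtains g where "continuous_map K euclideanreal g" "\<And>x. x \<in> topspace X \<Longrightarrow> g (e x) = f x"
proof -
  have "\<forall>f::'a \<Rightarrow> real. continuous_map X euclideanreal f \<and> bounded (f ` topspace X) \<longrightarrow>
      (\<exists>g. continuous_map K euclideanreal g \<and> (\<forall>x\<in>topspace X. g (e x) = f x))"
    using assms(1) by (simp add: stone_cech_def)
  then show thesis
    using assms(2,3) that by blast
qed

lemma stone_cech_extend_Cb:
  assumes "stone_cech X K e" "f \<in> Cb X"
  obtains g where "continuous_map K euclidean g" "\<And>x. x \<in> topspace X \<Longrightarrow> g (e x) = f x"
proof -
  have f: "continuous_map X euclidean f" "bounded (f ` topspace X)"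
    using assms(2) unfolding Cb_def by auto
  have "continuous_map X euclideanreal (\<lambda>x. Re (f x))"
    using continuous_map_compose[OF f(1), of euclideanreal Re]
    by (simp add: o_def continuous_on_Re continuous_on_id)
  moreover have "bounded ((\<lambda>x. Re (f x)) ` topspace X)"
    using bounded_linear_image[OF f(2) bounded_linear_Re] by (simp add: image_image)
  ultimately obtain g1 where g1: "continuous_map K euclideanreal g1"
      "\<And>x. x \<in> topspace X \<Longrightarrow> g1 (e x) = Re (f x)"
    using stone_cech_extend_real[OF assms(1)] by blast
  have "continuous_map X euclideanreal (\<lambda>x. Im (f x))"
    using continuous_map_compose[OF f(1), of euclideanreal Im]
    by (simp add: o_def continuous_on_Im continuous_on_id)
  moreover have "bounded ((\<lambda>x. Im (f x)) ` topspace X)"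
    using bounded_linear_image[OF f(2) bounded_linear_Im] by (simp add: image_image)
  ultimately obtain g2 where g2: "continuous_map K euclideanreal g2"
      "\<And>x. x \<in> topspace X \<Longrightarrow> g2 (e x) = Im (f x)"
    using stone_cech_extend_real[OF assms(1)] by blast
  have of_real_cont: "continuous_map euclideanreal euclidean (\<lambda>t. c * complex_of_real t)" for c
    by (simp add: continuous_on_mult continuous_on_const continuous_on_of_real continuous_on_id)
  show thesis
  proof
    show "continuous_map K euclidean (\<lambda>y. 1 * complex_of_real (g1 y) + \<i> * complex_of_real (g2 y))"
      using continuous_map_add[OF continuous_map_compose[OF g1(1) of_real_cont[of 1]]
          continuous_map_compose[OF g2(1) of_real_cont[of \<i>]]]
      by (simp add: o_def)
  qed (simp add: g1(2) g2(2) complex_eq_iff)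
qed

lemma stone_cech_separating_zero_sets:
  assumes "stone_cech X K e" "p \<in> topspace K" "q \<in> topspace K" "p \<noteq> q"
  obtains Z1 Z2 where "zero_set X Z1" "zero_set X Z2" "Z1 \<inter> Z2 = {}"
    "p \<in> K closure_of (e ` Z1)" "q \<in> K closure_of (e ` Z2)"
proof -
  have K: "compact_space K" "Hausdorff_space K" and dense: "K closure_of (e ` topspace X) = topspace K"
    and e: "continuous_map X K e"
    using assms(1) stone_cech_continuous_map unfolding stone_cech_def by blast+
  have "completely_regular_space K"
    using K by (simp add: compact_Hausdorff_or_regular_imp_normal_space normal_imp_completely_regular_space)
  then obtain g where g: "continuous_map K euclideanreal g" "g p = 0" "g q = 1"
    using assms(2-4) closedin_Hausdorff_singleton[OF K(2) assms(3)]
    unfolding completely_regular_space_alt by (metis Diff_iff image_subset_iff singletonD singletonI)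
  have ge: "continuous_map X euclideanreal (\<lambda>x. g (e x))"
    using continuous_map_compose[OF e g(1)] by (simp add: o_def)
  have near: "r \<in> K closure_of (e ` {x \<in> topspace X. g (e x) \<in> U})"
    if "open U" "r \<in> topspace K" "g r \<in> U" for r U
  proof -
    have "{x \<in> topspace X. e x \<in> {y \<in> topspace K. g y \<in> U}} = {x \<in> topspace X. g (e x) \<in> U}"
      using continuous_map_image_subset_topspace[OF e] by auto
    then show ?thesis
      using dense_image_closure_of_preimage[OF e dense, of "{y \<in> topspace K. g y \<in> U}" r] that
        openin_continuous_map_preimage[OF g(1), of U]
      by simp
  qed
  show thesis
  proof
    show "zero_set X {x \<in> topspace X. g (e x) \<le> 1/3}"
      using ge by (rule zero_set_sublevel)
    show "zero_set X {x \<in> topspace X. 2/3 \<le> g (e x)}"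
      using ge by (rule zero_set_superlevel)
    have "p \<in> K closure_of (e ` {x \<in> topspace X. g (e x) \<in> {..<1/3}})"
      by (rule near) (simp_all add: assms(2) g(2))
    then show "p \<in> K closure_of (e ` {x \<in> topspace X. g (e x) \<le> 1/3})"
      by (rule closure_of_mono[THEN subsetD, rotated]) auto
    have "q \<in> K closure_of (e ` {x \<in> topspace X. g (e x) \<in> {2/3<..}})"
      by (rule near) (simp_all add: assms(3) g(3))
    then show "q \<in> K closure_of (e ` {x \<in> topspace X. 2/3 \<le> g (e x)})"
      by (rule closure_of_mono[THEN subsetD, rotated]) auto
  qed auto
qed

lemma C01_subset_Cb: "C01 X \<subseteq> Cb X"
proof
  fix f assume "f \<in> C01 X"
  moreover have "bounded (complex_of_real ` {0..1})"
    by (intro compact_imp_bounded compact_continuous_image continuous_intros) auto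
  ultimately show "f \<in> Cb X"
    unfolding C01_def Cb_def using bounded_subset by blast
qed

lemma antisymmetric_filter_extension_eq:
  assumes "z_filter X \<F>" "antisymmetric_filter A \<F>"
    and "\<psi> \<in> A" "\<psi> ` topspace X \<subseteq> complex_of_real ` {0..1}"
    and "continuous_map K euclidean \<psi>h" "\<And>x. x \<in> topspace X \<Longrightarrow> \<psi>h (e x) = \<psi> x"
    and "p \<in> cluster_set K e \<F>" "q \<in> cluster_set K e \<F>"
  shows "\<psi>h p = \<psi>h q"
proof -
  let ?I = "\<Inter>F\<in>\<F>. closure (\<psi> ` F)"
  have image_in_I: "\<psi>h r \<in> ?I" if "r \<in> cluster_set K e \<F>" for r
  proof (intro INT_I)
    fix F assume "F \<in> \<F>"
    then show "\<psi>h r \<in> closure (\<psi> ` F)"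
      using that assms(5,6) z_filter_subset_topspace[OF assms(1)]
      by (intro extension_in_closure_image[of K]) auto
  qed
  obtain F0 where "F0 \<in> \<F>"
    using assms(1) unfolding z_filter_def by blast
  then have "?I \<subseteq> closure (\<psi> ` F0)"
    by blast
  also have "\<dots> \<subseteq> closure (complex_of_real ` {0..1})"
    using assms(4) z_filter_subset_topspace[OF assms(1) \<open>F0 \<in> \<F>\<close>] by (intro closure_mono) blast
  also have "\<dots> = complex_of_real ` {0..1}"
    by (intro closure_closed compact_imp_closed compact_continuous_image continuous_intros) auto
  finally obtain c where "?I = {c}"
    using assms(2,3) unfolding antisymmetric_filter_def by blast
  then show ?thesis
    using image_in_I[OF assms(7)] image_in_I[OF assms(8)] by simp
qed

lemma
  assumes "self_adjoint_subalgebra X A"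
  shows self_adjoint_subalgebra_Cb: "A \<subseteq> Cb X"
    and self_adjoint_subalgebra_add: "f \<in> A \<Longrightarrow> g \<in> A \<Longrightarrow> (\<lambda>x. f x + g x) \<in> A"
    and self_adjoint_subalgebra_mult: "f \<in> A \<Longrightarrow> g \<in> A \<Longrightarrow> (\<lambda>x. f x * g x) \<in> A"
    and self_adjoint_subalgebra_scale: "f \<in> A \<Longrightarrow> (\<lambda>x. c * f x) \<in> A"
    and self_adjoint_subalgebra_cnj: "f \<in> A \<Longrightarrow> (\<lambda>x. cnj (f x)) \<in> A"
  using assms unfolding self_adjoint_subalgebra_def by simp_all

lemma self_adjoint_subalgebra_Re:
  assumes "self_adjoint_subalgebra X A" "\<phi> \<in> A"
  shows "(\<lambda>x. complex_of_real (Re (\<phi> x))) \<in> A"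
proof -
  have "(\<lambda>x. (1/2) * (\<phi> x + cnj (\<phi> x))) \<in> A"
    using assms by (intro self_adjoint_subalgebra_scale self_adjoint_subalgebra_add self_adjoint_subalgebra_cnj)
  moreover have "(\<lambda>x. (1/2) * (\<phi> x + cnj (\<phi> x))) = (\<lambda>x. complex_of_real (Re (\<phi> x)))"
    by (simp add: fun_eq_iff complex_eq_iff)
  ultimately show ?thesis
    by simp
qed

lemma self_adjoint_subalgebra_Im:
  assumes "self_adjoint_subalgebra X A" "\<phi> \<in> A"
  shows "(\<lambda>x. complex_of_real (Im (\<phi> x))) \<in> A"
proof -
  have "(\<lambda>x. (-\<i>/2) * (\<phi> x + (-1) * cnj (\<phi> x))) \<in> A"
    using assms by (intro self_adjoint_subalgebra_scale self_adjoint_subalgebra_add self_adjoint_subalgebra_cnj)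
  moreover have "(\<lambda>x. (-\<i>/2) * (\<phi> x + (-1) * cnj (\<phi> x))) = (\<lambda>x. complex_of_real (Im (\<phi> x)))"
    by (simp add: fun_eq_iff complex_eq_iff)
  ultimately show ?thesis
    by simp
qed

lemma self_adjoint_subalgebra_real_extension_eq:
  assumes A: "self_adjoint_subalgebra X A"
    and eq01: "\<And>\<psi> \<psi>h. \<psi> \<in> A \<Longrightarrow> \<psi> ` topspace X \<subseteq> complex_of_real ` {0..1} \<Longrightarrow>
        continuous_map K euclidean \<psi>h \<Longrightarrow> (\<And>x. x \<in> topspace X \<Longrightarrow> \<psi>h (e x) = \<psi> x) \<Longrightarrow>
        \<psi>h p = \<psi>h q"
    and s: "(\<lambda>x. complex_of_real (s x)) \<in> A" "\<And>x. x \<in> topspace X \<Longrightarrow> \<bar>s x\<bar> \<le> 1"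
    and sh: "continuous_map K euclideanreal sh" "\<And>x. x \<in> topspace X \<Longrightarrow> sh (e x) = s x"
  shows "sh p = sh q"
proof -
  let ?u = "\<lambda>x. complex_of_real (s x)"
  have poly_eq: "P (sh p) = P (sh q)"
    if PA: "(\<lambda>x. complex_of_real (P (s x))) \<in> A" and P01: "\<And>t. \<bar>t\<bar> \<le> 1 \<Longrightarrow> P t \<in> {0..1}"
      and Pc: "continuous_on UNIV P" for P
  proof -
    have "complex_of_real (P (sh p)) = complex_of_real (P (sh q))"
    proof (rule eq01[OF PA])
      show "(\<lambda>x. complex_of_real (P (s x))) ` topspace X \<subseteq> complex_of_real ` {0..1}"
        using P01 s(2) by blast
      have "continuous_map euclideanreal euclidean (\<lambda>t. complex_of_real (P t))"
        using Pc by (simp add: continuous_on_of_real)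
      from continuous_map_compose[OF sh(1) this]
      show "continuous_map K euclidean (\<lambda>y. complex_of_real (P (sh y)))"
        by (simp add: o_def)
    qed (simp add: sh(2))
    then show ?thesis
      by simp
  qed
  have square: "(sh p)^2 = (sh q)^2"
  proof (rule poly_eq)
    have "(\<lambda>x. ?u x * ?u x) \<in> A"
      using s(1) by (intro self_adjoint_subalgebra_mult[OF A])
    then show "(\<lambda>x. complex_of_real ((s x)^2)) \<in> A"
      by (simp add: power2_eq_square)
    show "t^2 \<in> {0..1}" if "\<bar>t\<bar> \<le> 1" for t :: real
      using that by (simp add: abs_square_le_1)
  qed (intro continuous_intros)
  \<comment> \<open>\<open>A\<close> need not contain constants, hence a \<open>[0,1]\<close>-valued polynomial without
    constant term rather than \<open>(s + 1)/2\<close>\<close>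
  have "((sh p)^2 + (sh p)^3) / 2 = ((sh q)^2 + (sh q)^3) / 2"
  proof (rule poly_eq)
    have "(\<lambda>x. (1/2) * (?u x * ?u x + ?u x * (?u x * ?u x))) \<in> A"
      using s(1) by (intro self_adjoint_subalgebra_scale[OF A] self_adjoint_subalgebra_add[OF A]
          self_adjoint_subalgebra_mult[OF A])
    then show "(\<lambda>x. complex_of_real (((s x)^2 + (s x)^3) / 2)) \<in> A"
      by (simp add: power2_eq_square power3_eq_cube mult.assoc)
    show "(t^2 + t^3) / 2 \<in> {0..1}" if "\<bar>t\<bar> \<le> 1" for t :: real
    proof -
      have t: "t^2 \<le> 1" "0 \<le> 1 + t" "1 + t \<le> 2"
        using that by (auto simp: abs_square_le_1 abs_le_iff)
      have "t^2 + t^3 = t^2 * (1 + t)"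
        by (simp add: power2_eq_square power3_eq_cube algebra_simps)
      moreover have "t^2 * (1 + t) \<le> 1 * 2"
        using t by (intro mult_mono) auto
      moreover have "0 \<le> t^2 * (1 + t)"
        using t(2) by simp
      ultimately show ?thesis
        by simp
    qed
  qed (intro continuous_intros, simp)
  then have "(sh p)^3 = (sh q)^3"
    using square by simp
  then have "root 3 ((sh p)^3) = root 3 ((sh q)^3)"
    by simp
  then show ?thesis
    by (simp add: odd_real_root_power_cancel)
qed

lemma self_adjoint_subalgebra_extension_eq:
  assumes A: "self_adjoint_subalgebra X A"
    and eq01: "\<And>\<psi> \<psi>h. \<psi> \<in> A \<Longrightarrow> \<psi> ` topspace X \<subseteq> complex_of_real ` {0..1} \<Longrightarrow>
        continuous_map K euclidean \<psi>h \<Longrightarrow> (\<And>x. x \<in> topspace X \<Longrightarrow> \<psi>h (e x) = \<psi> x) \<Longrightarrow>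
        \<psi>h p = \<psi>h q"
    and \<phi>: "\<phi> \<in> A" "continuous_map K euclidean \<phi>h" "\<And>x. x \<in> topspace X \<Longrightarrow> \<phi>h (e x) = \<phi> x"
  shows "\<phi>h p = \<phi>h q"
proof -
  have "bounded (\<phi> ` topspace X)"
    using self_adjoint_subalgebra_Cb[OF A] \<phi>(1) unfolding Cb_def by blast
  then obtain M where M: "M > 0" "\<And>x. x \<in> topspace X \<Longrightarrow> norm (\<phi> x) \<le> M"
    unfolding bounded_pos by blast
  have "(\<lambda>x. complex_of_real (1/M) * \<phi> x) \<in> A"
    using \<phi>(1) by (rule self_adjoint_subalgebra_scale[OF A])
  then have \<psi>A: "(\<lambda>x. \<phi> x / complex_of_real M) \<in> A"
    by (simp add: divide_inverse mult.commute)
  have component_eq: "f (\<phi>h p / complex_of_real M) = f (\<phi>h q / complex_of_real M)"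
    if fA: "(\<lambda>x. complex_of_real (f (\<phi> x / complex_of_real M))) \<in> A"
      and f: "bounded_linear f" "\<And>z. \<bar>f z\<bar> \<le> norm z" for f :: "complex \<Rightarrow> real"
  proof (rule self_adjoint_subalgebra_real_extension_eq[of X A K e p q, OF A eq01 fA])
    show "\<bar>f (\<phi> x / complex_of_real M)\<bar> \<le> 1" if "x \<in> topspace X" for x
    proof -
      have "\<bar>f (\<phi> x / complex_of_real M)\<bar> \<le> norm (\<phi> x / complex_of_real M)"
        by (rule f(2))
      also have "\<dots> = norm (\<phi> x) / M"
        using M(1) by (simp add: norm_divide)
      also have "\<dots> \<le> 1"
        using M that by simp
      finally show ?thesis .
    qed
    have "bounded_linear (\<lambda>z. f (z / complex_of_real M))"
      using f(1) bounded_linear_divide by (rule bounded_linear_compose)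
    then have "continuous_map euclidean euclideanreal (\<lambda>z. f (z / complex_of_real M))"
      by (simp add: linear_continuous_on)
    from continuous_map_compose[OF \<phi>(2) this]
    show "continuous_map K euclideanreal (\<lambda>y. f (\<phi>h y / complex_of_real M))"
      by (simp add: o_def)
  qed (simp_all add: \<phi>(3))
  have "Re (\<phi>h p / complex_of_real M) = Re (\<phi>h q / complex_of_real M)"
    using self_adjoint_subalgebra_Re[OF A \<psi>A]
    by (intro component_eq bounded_linear_Re abs_Re_le_cmod)
  moreover have "Im (\<phi>h p / complex_of_real M) = Im (\<phi>h q / complex_of_real M)"
    using self_adjoint_subalgebra_Im[OF A \<psi>A]
    by (intro component_eq bounded_linear_Im abs_Im_le_cmod)
  ultimately have "\<phi>h p / complex_of_real M = \<phi>h q / complex_of_real M"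
    by (simp add: complex_eq_iff)
  then show ?thesis
    using M(1) by simp
qed

lemma antisymmetric_filter_cluster_extension_eq:
  assumes "A \<subseteq> C01 X \<or> self_adjoint_subalgebra X A" "z_filter X \<F>" "antisymmetric_filter A \<F>"
    and "\<phi> \<in> A" "continuous_map K euclidean \<phi>h" "\<And>x. x \<in> topspace X \<Longrightarrow> \<phi>h (e x) = \<phi> x"
    and "p \<in> cluster_set K e \<F>" "q \<in> cluster_set K e \<F>"
  shows "\<phi>h p = \<phi>h q"
  using assms(1)
proof
  assume "A \<subseteq> C01 X"
  then have "\<phi> ` topspace X \<subseteq> complex_of_real ` {0..1}"
    using assms(4) unfolding C01_def by blast
  then show ?thesis
    by (rule antisymmetric_filter_extension_eq[OF assms(2-4) _ assms(5-8)])
next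
  assume "self_adjoint_subalgebra X A"
  then show ?thesis
  proof (rule self_adjoint_subalgebra_extension_eq[of X A K e p q, OF _ _ assms(4-6)])
    show "\<psi>h p = \<psi>h q"
      if "\<psi> \<in> A" "\<psi> ` topspace X \<subseteq> complex_of_real ` {0..1}" "continuous_map K euclidean \<psi>h"
        "\<And>x. x \<in> topspace X \<Longrightarrow> \<psi>h (e x) = \<psi> x" for \<psi> \<psi>h
      using antisymmetric_filter_extension_eq[OF assms(2,3) that assms(7,8)] .
  qed
qed

lemma cluster_set_unique:
  assumes "stone_cech X K e" "A \<subseteq> C01 X \<or> self_adjoint_subalgebra X A" "separates_zero_sets X A"
    and "z_filter X \<F>" "antisymmetric_filter A \<F>"
    and p: "p \<in> cluster_set K e \<F>" and q: "q \<in> cluster_set K e \<F>"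
  shows "p = q"
proof (rule ccontr)
  assume "p \<noteq> q"
  obtain F0 where "F0 \<in> \<F>"
    using assms(4) unfolding z_filter_def by blast
  then have "p \<in> topspace K" "q \<in> topspace K"
    using p q closure_of_subset_topspace by fastforce+
  then obtain Z1 Z2 where Z: "zero_set X Z1" "zero_set X Z2" "Z1 \<inter> Z2 = {}"
      "p \<in> K closure_of (e ` Z1)" "q \<in> K closure_of (e ` Z2)"
    using stone_cech_separating_zero_sets[OF assms(1)] \<open>p \<noteq> q\<close> by metis
  obtain \<phi> where \<phi>: "\<phi> \<in> A" "closure (\<phi> ` Z1) \<inter> closure (\<phi> ` Z2) = {}"
    using assms(3) Z(1-3) unfolding separates_zero_sets_def by blast
  have "\<phi> \<in> Cb X"
    using assms(2) \<phi>(1) C01_subset_Cb self_adjoint_subalgebra_Cb by blast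
  then obtain \<phi>h where \<phi>h: "continuous_map K euclidean \<phi>h" "\<And>x. x \<in> topspace X \<Longrightarrow> \<phi>h (e x) = \<phi> x"
    using stone_cech_extend_Cb[OF assms(1)] by blast
  have "\<phi>h p \<in> closure (\<phi> ` Z1)" "\<phi>h q \<in> closure (\<phi> ` Z2)"
    using Z(1,2,4,5) zero_set_subset_topspace \<phi>h
    by (auto intro!: extension_in_closure_image[of K])
  moreover have "\<phi>h p = \<phi>h q"
    using antisymmetric_filter_cluster_extension_eq[OF assms(2,4,5) \<phi>(1) \<phi>h p q] .
  ultimately show False
    using \<phi>(2) by auto
qed

theorem corollary2p15:
  fixes X :: "'a topology" and K :: "'b topology" and e :: "'a \<Rightarrow> 'b"
    and A :: "('a \<Rightarrow> complex) set" and \<F> :: "'a set set"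
  assumes "completely_regular_space X" and "Hausdorff_space X"
    and "stone_cech X K e"
    and "A \<subseteq> C01 X \<or> self_adjoint_subalgebra X A"
    and "separates_zero_sets X A"
    and "z_filter X \<F>" and "antisymmetric_filter A \<F>"
  shows "\<exists>!p. p \<in> (\<Inter>F\<in>\<F>. K closure_of (e ` F))"
proof -
  have "compact_space K"
    using assms(3) by (simp add: stone_cech_def)
  then have "cluster_set K e \<F> \<noteq> {}"
    using z_filter_subset_topspace[OF assms(6)] z_filter_finite_intersection[OF assms(6)]
    by (intro cluster_set_nonempty[OF _ stone_cech_continuous_map[OF assms(3)]])
  moreover have "p = q" if "p \<in> cluster_set K e \<F>" "q \<in> cluster_set K e \<F>" for p q
    using cluster_set_unique[OF assms(3-7) that] .
  ultimately show ?thesis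
    by blast
qed

end
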